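(* For all positive integers $n$ and $k$, $$\sum_{r=1}^{k}(-1)^{k-r}\sum_{\substack{k_1+k_2+\cdots+k_r=k\\ k_i\geq 1}}\ \prod_{i=1}^{r}\binom{n}{k_i}=\binom{n+k-1}{k},$$ where the inner sum runs over all ordered $r$-tuples $(k_1,\dots,k_r)$ of positive integers with sum $k$ (i.e., over all compositions of $k$ into $r$ parts).
   Context: Binomial coefficients $\binom{m}{j}$ for nonnegative integers $m$ and $j$ are the usual ones, with $\binom{m}{j}=0$ when $j>m$. *)

theory Defs
  imports Main
begin

definition compositions :: "nat \<Rightarrow> nat \<Rightarrow> nat list set" where
  "compositions k r = {ks. length ks = r \<and> (\<forall>x\<in>set ks. x \<ge> 1) \<and> sum_list ks = k}"

end

theory Submission
  imports Defs "HOL-Computational_Algebra.Formal_Power_Series"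
begin

text \<open>Splitting off the first part shows that the alternating sum h over all compositions of k
  with weights a satisfies h 0 = 1 and h k = -(\<Sum>j=1..k. a j * h (k - j)), i.e. h is the
  coefficient sequence of 1 / (1 + \<Sum>j\<ge>1. a j X^j). For a j = n choose j this series is
  (1 + X)^-n, whose coefficients (-n gchoose k) = (-1)^k (n + k - 1 choose k) are recognised
  through Vandermonde's identity.\<close>

lemma finite_compositions: "finite (compositions k r)"
proof (rule finite_subset)
  show "compositions k r \<subseteq> {ks. set ks \<subseteq> {0..k} \<and> length ks = r}"
    unfolding compositions_def using member_le_sum_list by fastforce
  show "finite {ks. set ks \<subseteq> {0..k} \<and> length ks = r}"
    by (rule finite_lists_length_eq) simp
qed

lemma compositions_0_0: "compositions 0 0 = {[]}"
  unfolding compositions_def by auto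

lemma compositions_0_right: "k > 0 \<Longrightarrow> compositions k 0 = {}"
  unfolding compositions_def by auto

lemma length_le_sum_list_if_positive: "\<forall>x\<in>set ks. (x::nat) \<ge> 1 \<Longrightarrow> length ks \<le> sum_list ks"
  by (induction ks) auto

lemma compositions_eq_empty_if_less: "k < r \<Longrightarrow> compositions k r = {}"
  unfolding compositions_def using length_le_sum_list_if_positive by fastforce

lemma compositions_Suc:
  "compositions k (Suc r) = (\<lambda>(j, ks). j # ks) ` (SIGMA j:{1..k}. compositions (k - j) r)"
proof (intro set_eqI iffI)
  fix xs assume "xs \<in> compositions k (Suc r)"
  then obtain j ks where "xs = j # ks" "j \<in> {1..k}" "ks \<in> compositions (k - j) r"
    unfolding compositions_def by (cases xs) auto
  then show "xs \<in> (\<lambda>(j, ks). j # ks) ` (SIGMA j:{1..k}. compositions (k - j) r)"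
    by force
next
  fix xs assume "xs \<in> (\<lambda>(j, ks). j # ks) ` (SIGMA j:{1..k}. compositions (k - j) r)"
  then show "xs \<in> compositions k (Suc r)"
    unfolding compositions_def by auto
qed

definition composition_sum :: "(nat \<Rightarrow> 'a::comm_semiring_1) \<Rightarrow> nat \<Rightarrow> nat \<Rightarrow> 'a" where
  "composition_sum a k r = (\<Sum>ks\<in>compositions k r. \<Prod>i<r. a (ks ! i))"

lemma composition_sum_0_0: "composition_sum a 0 0 = 1"
  by (simp add: composition_sum_def compositions_0_0)

lemma composition_sum_0_right: "k > 0 \<Longrightarrow> composition_sum a k 0 = 0"
  by (simp add: composition_sum_def compositions_0_right)

lemma composition_sum_eq_0_if_less: "k < r \<Longrightarrow> composition_sum a k r = 0"
  by (simp add: composition_sum_def compositions_eq_empty_if_less)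

lemma composition_sum_Suc:
  "composition_sum a k (Suc r) = (\<Sum>j=1..k. a j * composition_sum a (k - j) r)"
proof -
  have inj: "inj_on (\<lambda>(j, ks). j # ks) (SIGMA j:{1..k}. compositions (k - j) r)"
    by (auto simp: inj_on_def)
  have "composition_sum a k (Suc r)
      = (\<Sum>(j, ks)\<in>(SIGMA j:{1..k}. compositions (k - j) r). \<Prod>i<Suc r. a ((j # ks) ! i))"
    unfolding composition_sum_def compositions_Suc sum.reindex[OF inj]
    by (simp add: case_prod_beta)
  also have "\<dots> = (\<Sum>j=1..k. \<Sum>ks\<in>compositions (k - j) r. a j * (\<Prod>i<r. a (ks ! i)))"
    by (simp add: sum.Sigma finite_compositions prod.lessThan_Suc_shift del: prod.lessThan_Suc)
  finally show ?thesis
    by (simp add: composition_sum_def sum_distrib_left)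
qed

lemma of_int_composition_sum:
  "(of_int (composition_sum a k r) :: 'a::comm_ring_1) = composition_sum (\<lambda>j. of_int (a j)) k r"
  by (simp add: composition_sum_def)

definition signed_composition_sum :: "(nat \<Rightarrow> 'a::comm_ring_1) \<Rightarrow> nat \<Rightarrow> 'a" where
  "signed_composition_sum a k = (\<Sum>r\<le>k. (-1) ^ r * composition_sum a k r)"

lemma of_int_signed_composition_sum:
  "(of_int (signed_composition_sum a k) :: 'a::comm_ring_1) = signed_composition_sum (\<lambda>j. of_int (a j)) k"
  by (simp add: signed_composition_sum_def of_int_composition_sum)

lemma signed_composition_sum_conv_lessThan:
  "k < m \<Longrightarrow> signed_composition_sum a k = (\<Sum>r<m. (-1) ^ r * composition_sum a k r)"
  unfolding signed_composition_sum_def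
  by (rule sum.mono_neutral_left) (auto simp: composition_sum_eq_0_if_less)

lemma signed_composition_sum_0: "signed_composition_sum a 0 = 1"
  by (simp add: signed_composition_sum_def composition_sum_0_0)

lemma signed_composition_sum_rec:
  assumes "k > 0"
  shows "signed_composition_sum a k = - (\<Sum>j=1..k. a j * signed_composition_sum a (k - j))"
proof -
  have "signed_composition_sum a k = (\<Sum>r<Suc k. (-1) ^ r * composition_sum a k r)"
    by (rule signed_composition_sum_conv_lessThan) simp
  also have "\<dots> = (\<Sum>r<k. (-1) ^ Suc r * composition_sum a k (Suc r))"
    by (subst sum.lessThan_Suc_shift) (simp add: composition_sum_0_right assms)
  also have "\<dots> = - (\<Sum>j=1..k. a j * (\<Sum>r<k. (-1) ^ r * composition_sum a (k - j) r))"
    by (simp add: composition_sum_Suc sum_distrib_left sum_negf algebra_simps sum.swap[of _ "{..<k}"])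
  also have "\<dots> = - (\<Sum>j=1..k. a j * signed_composition_sum a (k - j))"
    by (intro arg_cong[where f = uminus] sum.cong refl arg_cong[where f = "(*) _"]
        signed_composition_sum_conv_lessThan[symmetric]) auto
  finally show ?thesis .
qed

lemma signed_composition_sum_eqI:
  assumes "f 0 = 1"
    and "\<And>k. k > 0 \<Longrightarrow> f k = - (\<Sum>j=1..k. a j * f (k - j))"
  shows "signed_composition_sum a k = f k"
proof (induction k rule: less_induct)
  case (less k)
  show ?case
  proof (cases "k = 0")
    case True
    then show ?thesis by (simp add: signed_composition_sum_0 assms(1))
  next
    case False
    then show ?thesis
      by (simp add: signed_composition_sum_rec assms(2) less.IH)
  qed
qed

lemma signed_composition_sum_gbinomial:
  fixes x :: "'a::field_char_0"
  shows "signed_composition_sum (\<lambda>j. x gchoose j) k = (- x) gchoose k"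
proof (rule signed_composition_sum_eqI)
  fix k :: nat assume "k > 0"
  have "0 = (\<Sum>j=0..k. (x gchoose j) * ((- x) gchoose (k - j)))"
    using gbinomial_Vandermonde[of x "- x" k] \<open>k > 0\<close> by (simp add: gbinomial_0_left)
  also have "\<dots> = ((- x) gchoose k) + (\<Sum>j=1..k. (x gchoose j) * ((- x) gchoose (k - j)))"
    by (simp add: sum.atLeast_Suc_atMost)
  finally show "(- x) gchoose k = - (\<Sum>j=1..k. (x gchoose j) * ((- x) gchoose (k - j)))"
    by (simp add: eq_neg_iff_add_eq_0)
qed simp

lemma sum_neg_one_power_diff_composition_sum:
  assumes "k > 0"
  shows "(\<Sum>r=1..k. (-1) ^ (k - r) * composition_sum a k r) = (-1) ^ k * signed_composition_sum a k"
proof -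
  have "(\<Sum>r=1..k. (-1) ^ (k - r) * composition_sum a k r)
      = (-1) ^ k * (\<Sum>r\<in>{0..k}. (-1) ^ r * composition_sum a k r)"
    using assms
    by (simp add: sum.atLeast_Suc_atMost composition_sum_0_right sum_distrib_left
        mult.assoc right_diff_distrib neg_one_power_add_eq_neg_one_power_diff[symmetric] power_add)
  then show ?thesis
    by (simp add: signed_composition_sum_def atLeast0AtMost)
qed

theorem theorem3:
  fixes n k :: nat
  assumes "n \<ge> 1" and "k \<ge> 1"
  shows "(\<Sum>r=1..k. (-1::int) ^ (k - r) *
            (\<Sum>ks\<in>compositions k r. \<Prod>i<r. int (n choose (ks ! i))))
         = int ((n + k - 1) choose k)"
proof -
  let ?a = "\<lambda>j. int (n choose j)"
  have "real_of_int ((-1) ^ k * signed_composition_sum ?a k) = (-1) ^ k * ((- real n) gchoose k)"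
    by (simp add: of_int_signed_composition_sum binomial_gbinomial signed_composition_sum_gbinomial)
  also have "\<dots> = real ((n + k - 1) choose k)"
    using assms(2) by (simp add: gbinomial_minus binomial_gbinomial of_nat_diff flip: power_mult_distrib)
  finally show ?thesis
    using sum_neg_one_power_diff_composition_sum[of k ?a] assms(2)
    by (simp add: composition_sum_def of_int_eq_iff[symmetric, where 'a = real])
qed

end
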